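(* Let $n\geq 1$ and let $x_1,\dots,x_n\in(0,\tfrac12]$ be not all equal. With $A_n,G_n,A'_n,G'_n$ as in the context, put $r=\frac{\ln(A'_n/G'_n)}{\ln(A_n/G_n)}$. Then $$\frac{A'_n}{G'_n}<\left(\frac{A_n}{G_n}\right)^{\frac{A'_n-G'_n}{A_n-G_n}-r\ln\sqrt{\frac{A'_nG'_n}{A_nG_n}}}<\left(\frac{A_n}{G_n}\right)^{\frac{A'_n-G'_n}{A_n-G_n}-r\ln\frac{A'_n}{A_n}}<\left(\frac{A_n}{G_n}\right)^{1-r\ln\frac{A'_n}{A_n}}<\frac{A_n}{G_n},$$ $$\frac{A'_n}{G'_n}<\max\left\{\left(\frac{A'_n}{G'_n}\right)^{1+\ln\sqrt{\frac{A'_nG'_n}{A_nG_n}}},\left(\frac{A'_n}{G'_n}\right)^{\frac{A_n-G_n}{A'_n-G'_n}}\right\}<\left(\frac{A'_n}{G'_n}\right)^{\left(1+\ln\sqrt{\frac{A'_nG'_n}{A_nG_n}}\right)\frac{A_n-G_n}{A'_n-G'_n}}<\frac{A_n}{G_n},$$ and $$\frac{{A'_n}^n-{G'_n}^n}{{A_n}^n-{G_n}^n}<\frac{{A'_n}^n{G'_n}^n\ln\frac{A'_n}{G'_n}}{{A_n}^n{G_n}^n\ln\frac{A_n}{G_n}}.$$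
   Context: $A_n=\frac1n\sum_{i=1}^n x_i$ and $G_n=\prod_{i=1}^n x_i^{1/n}$ are the arithmetic and geometric means of $x_1,\dots,x_n$; $A'_n=\frac1n\sum_{i=1}^n(1-x_i)$ and $G'_n=\prod_{i=1}^n(1-x_i)^{1/n}$ are the arithmetic and geometric means of $1-x_1,\dots,1-x_n$. *)

theory Defs
  imports "HOL-Analysis.Analysis"
begin

definition AM :: "nat \<Rightarrow> (nat \<Rightarrow> real) \<Rightarrow> real" where
  "AM n x = (\<Sum>i=1..n. x i) / real n"

definition GM :: "nat \<Rightarrow> (nat \<Rightarrow> real) \<Rightarrow> real" where
  "GM n x = (\<Prod>i=1..n. x i powr (1 / real n))"

definition AM' :: "nat \<Rightarrow> (nat \<Rightarrow> real) \<Rightarrow> real" where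
  "AM' n x = (\<Sum>i=1..n. 1 - x i) / real n"

definition GM' :: "nat \<Rightarrow> (nat \<Rightarrow> real) \<Rightarrow> real" where
  "GM' n x = (\<Prod>i=1..n. (1 - x i) powr (1 / real n))"

end

theory Submission
  imports Defs
begin

text \<open>
  The four means satisfy \<open>0 < G < A < 1/2 \<le> G' < A' = 1 - A\<close>, Ky Fan's inequality
  \<open>A'/G' < A/G\<close> and Alzer's inequality \<open>A' - G' < A - G\<close>. Like AM-GM itself, both come from
  summing a strict pointwise inequality between a function of \<open>x\<^sub>i\<close> and an affine function
  of \<open>x\<^sub>i\<close>. With \<open>\<alpha> = ln (A/G)\<close>, \<open>\<beta> = ln (A'/G')\<close> and \<open>L = ln \<surd>(A'G'/(AG))\<close>, every
  power inequality then reduces to a comparison of exponents, and the only one that is not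
  immediate is \<open>\<beta> (1 + L) < \<alpha> (A' - G')/(A - G)\<close>. It follows from the logarithmic mean
  of \<open>A'\<close> and \<open>G'\<close> exceeding their geometric mean, together with an elementary bound on
  \<open>(A - G)(1 + L)\<close>. The last inequality is the monotonicity of \<open>(w - 1)/ln w\<close> applied to
  \<open>w = (A/G)\<^sup>n\<close> and \<open>w = (A'/G')\<^sup>n\<close>.
\<close>

section \<open>Elementary inequalities from the sign of a derivative\<close>

lemma DERIV_sign_imp_less:
  fixes f f' :: "real \<Rightarrow> real"
  assumes "x \<noteq> a"
    and deriv: "\<And>y. min a x \<le> y \<Longrightarrow> y \<le> max a x \<Longrightarrow> (f has_real_derivative f' y) (at y)"
    and sign: "\<And>y. min a x < y \<Longrightarrow> y < max a x \<Longrightarrow> 0 < (y - a) * f' y"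
  shows "f a < f x"
proof (cases "x < a")
  case True
  show ?thesis
  proof (rule DERIV_neg_imp_decreasing_open[OF True])
    fix y assume "x < y" "y < a"
    then show "\<exists>d. (f has_real_derivative d) (at y) \<and> d < 0"
      using deriv[of y] sign[of y] True by (auto simp: mult_less_0_iff zero_less_mult_iff)
  next
    show "continuous_on {x..a} f"
      using deriv True by (intro DERIV_atLeastAtMost_imp_continuous_on) auto
  qed
next
  case False
  with \<open>x \<noteq> a\<close> have "a < x" by simp
  show ?thesis
  proof (rule DERIV_pos_imp_increasing_open[OF \<open>a < x\<close>])
    fix y assume "a < y" "y < x"
    then show "\<exists>d. (f has_real_derivative d) (at y) \<and> 0 < d"
      using deriv[of y] sign[of y] \<open>a < x\<close> by (auto simp: zero_less_mult_iff)
  next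
    show "continuous_on {a..x} f"
      using deriv \<open>a < x\<close> by (intro DERIV_atLeastAtMost_imp_continuous_on) auto
  qed
qed

lemma ln_less_tangent:
  fixes x m :: real
  assumes "0 < x" "0 < m" "x \<noteq> m"
  shows "ln x < ln m - 1 + x / m"
proof -
  have "x / m \<noteq> 1" using assms by simp
  then have "ln (x / m) < x / m - 1"
    using ln_le_minus_one[of "x / m"] ln_eq_minus_one[of "x / m"] assms by fastforce
  then show ?thesis using assms by (simp add: ln_div)
qed

lemma ln_le_tangent:
  fixes x m :: real
  assumes "0 < x" "0 < m"
  shows "ln x \<le> ln m - 1 + x / m"
  using ln_less_tangent[OF assms] assms by (cases "x = m") auto

lemma logit_less_tangent:
  fixes a x :: real
  assumes "0 < a" "a \<le> 1/2" "0 < x" "x \<le> 1/2" "x \<noteq> a"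
  shows "ln x - ln (1 - x) < ln a - ln (1 - a) + (x - a) / (a * (1 - a))"
proof -
  define f where "f y = ln a - ln (1 - a) + (y - a) / (a * (1 - a)) - ln y + ln (1 - y)" for y
  have "f a < f x"
  proof (rule DERIV_sign_imp_less[OF \<open>x \<noteq> a\<close>])
    fix y assume "min a x \<le> y" "y \<le> max a x"
    then have "0 < y" "y < 1" using assms by auto
    then show "(f has_real_derivative 1 / (a * (1 - a)) - 1 / y - 1 / (1 - y)) (at y)"
      unfolding f_def using assms by (auto intro!: derivative_eq_intros)
  next
    fix y assume "min a x < y" "y < max a x"
    then have y: "0 < y" "y < 1/2" "y \<noteq> a" using assms by auto
    have "(y - a) * (1 / (a * (1 - a)) - 1 / y - 1 / (1 - y))
        = (y - a)\<^sup>2 * ((1 - y - a) / (a * (1 - a) * y * (1 - y)))"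
      using y assms by (simp add: field_simps power2_eq_square)
    moreover have "0 < (y - a)\<^sup>2 * ((1 - y - a) / (a * (1 - a) * y * (1 - y)))"
      using y assms by (intro mult_pos_pos divide_pos_pos) auto
    ultimately show "0 < (y - a) * (1 / (a * (1 - a)) - 1 / y - 1 / (1 - y))" by simp
  qed
  then show ?thesis by (simp add: f_def)
qed

lemma alzer_pointwise:
  fixes q x :: real
  assumes "0 < q" "q \<le> 1/2" "0 < x" "x \<le> 1/2" "x \<noteq> q"
  shows "q * ln x - (1 - q) * ln (1 - x) < q * ln q - (1 - q) * ln (1 - q) + 2 * (x - q)"
proof -
  define f where "f y = 2 * y + (1 - q) * ln (1 - y) - q * ln y" for y
  have "f q < f x"
  proof (rule DERIV_sign_imp_less[OF \<open>x \<noteq> q\<close>])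
    fix y assume "min q x \<le> y" "y \<le> max q x"
    then have "0 < y" "y < 1" using assms by auto
    then show "(f has_real_derivative 2 - (1 - q) / (1 - y) - q / y) (at y)"
      unfolding f_def by (auto intro!: derivative_eq_intros)
  next
    fix y assume "min q x < y" "y < max q x"
    then have y: "0 < y" "y < 1/2" "y \<noteq> q" using assms by auto
    have "(y - q) * (2 - (1 - q) / (1 - y) - q / y) = (y - q)\<^sup>2 * ((1 - 2 * y) / (y * (1 - y)))"
      using y by (simp add: field_simps power2_eq_square)
    moreover have "0 < (y - q)\<^sup>2 * ((1 - 2 * y) / (y * (1 - y)))"
      using y by (intro mult_pos_pos divide_pos_pos) auto
    ultimately show "0 < (y - q) * (2 - (1 - q) / (1 - y) - q / y)" by simp
  qed
  then show ?thesis by (simp add: f_def algebra_simps)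
qed

lemma diff_mul_one_minus_mean_ln_less:
  fixes u v :: real
  assumes "0 < v" "v < u" "u \<le> 1"
  shows "(u - v) * (1 - (ln u + ln v) / 2) < ln u - ln v"
proof -
  define f where "f y = ln u - ln y - (u - y) * (1 - (ln u + ln y) / 2)" for y
  have "f u < f v"
  proof (rule DERIV_sign_imp_less[where a = u and x = v])
    fix y assume "min u v \<le> y" "y \<le> max u v"
    then have "0 < y" using assms by auto
    then show "(f has_real_derivative (y * (1 - ln u - ln y) + u - 2) / (2 * y)) (at y)"
      unfolding f_def by (auto intro!: derivative_eq_intros simp: field_simps)
  next
    fix y assume "min u v < y" "y < max u v"
    then have y: "v < y" "y < u" using assms by auto
    then have "0 < y" using assms by simp
    have "- y * ln y < - y * ln u + u - y"
      using ln_less_tangent[of u y] y \<open>0 < y\<close> assms by (simp add: field_simps)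
    moreover have "- y * ln u \<le> - u * ln u"
      using y assms by (intro mult_right_mono_neg) auto
    moreover have "- u * ln u \<le> 1 - u"
      using ln_le_tangent[of 1 u] assms by (simp add: field_simps)
    ultimately have "y * (1 - ln u - ln y) + u - 2 < 0" by (simp add: algebra_simps)
    then have "(y * (1 - ln u - ln y) + u - 2) / (2 * y) < 0"
      using \<open>0 < y\<close> by (simp add: divide_neg_pos)
    then show "0 < (y - u) * ((y * (1 - ln u - ln y) + u - 2) / (2 * y))"
      using y by (intro mult_neg_neg) auto
  qed (use assms in simp)
  then show ?thesis by (simp add: f_def)
qed

lemma ln_diff_less_diff_div_sqrt:
  fixes a b :: real
  assumes "0 < b" "b < a"
  shows "ln a - ln b < (a - b) / sqrt (a * b)"
proof -
  define z where "z = sqrt (a / b)"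
  have z: "1 < z" "a = b * z\<^sup>2" using assms by (simp_all add: z_def)
  define h where "h y = y - 1 / y - 2 * ln y" for y :: real
  have "h 1 < h z"
  proof (rule DERIV_sign_imp_less[where a = 1 and x = z])
    fix y assume "min 1 z \<le> y" "y \<le> max 1 z"
    then have "0 < y" using z by auto
    then show "(h has_real_derivative 1 + 1 / y\<^sup>2 - 2 / y) (at y)"
      unfolding h_def by (auto intro!: derivative_eq_intros simp: field_simps power2_eq_square)
  next
    fix y assume "min 1 z < y" "y < max 1 z"
    then have "1 < y" using z by auto
    then have "(y - 1) * (1 + 1 / y\<^sup>2 - 2 / y) = (y - 1) * (1 - 1 / y)\<^sup>2"
      by (simp add: field_simps power2_eq_square)
    also have "0 < \<dots>" using \<open>1 < y\<close> by (simp add: field_simps)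
    finally show "0 < (y - 1) * (1 + 1 / y\<^sup>2 - 2 / y)" .
  qed (use z in simp)
  moreover have "ln a - ln b = 2 * ln z"
    using z assms by (simp add: ln_mult ln_realpow)
  moreover have "(a - b) / sqrt (a * b) = z - 1 / z"
  proof -
    have "sqrt (a * b) = b * z" using z assms by (simp add: real_sqrt_mult power2_eq_square)
    then show ?thesis using z assms by (simp add: field_simps power2_eq_square)
  qed
  ultimately show ?thesis by (simp add: h_def)
qed

lemma diff_one_mul_ln_less:
  fixes v w :: real
  assumes "1 < v" "v < w"
  shows "(v - 1) * ln w < (w - 1) * ln v"
proof -
  define f where "f y = (y - 1) * ln v - (v - 1) * ln y" for y
  have "f v < f w"
  proof (rule DERIV_sign_imp_less[where a = v and x = w])
    fix y assume "min v w \<le> y" "y \<le> max v w"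
    then have "0 < y" using assms by auto
    then show "(f has_real_derivative ln v - (v - 1) / y) (at y)"
      unfolding f_def by (auto intro!: derivative_eq_intros)
  next
    fix y assume "min v w < y" "y < max v w"
    then have y: "v < y" using assms by auto
    have "(v - 1) / y < (v - 1) / v" using y assms by (simp add: frac_less2)
    also have "\<dots> \<le> ln v" using ln_le_tangent[of 1 v] assms by (simp add: field_simps)
    finally show "0 < (y - v) * (ln v - (v - 1) / y)" using y by simp
  qed (use assms in simp)
  then show ?thesis by (simp add: f_def)
qed

section \<open>Arithmetic and geometric means\<close>

lemma GM_pos:
  assumes "\<And>i. i \<in> {1..n} \<Longrightarrow> 0 < y i"
  shows "0 < GM n y"
proof -
  have "0 < y i powr (1 / real n)" if "i \<in> {1..n}" for i using assms[OF that] by simp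
  then show ?thesis unfolding GM_def by (rule prod_pos)
qed

lemma ln_GM:
  assumes "\<And>i. i \<in> {1..n} \<Longrightarrow> 0 < y i"
  shows "ln (GM n y) = (\<Sum>i=1..n. ln (y i)) / real n"
proof -
  have "y i \<noteq> 0" if "i \<in> {1..n}" for i using assms[OF that] by simp
  then show ?thesis unfolding GM_def by (subst ln_prod) (auto simp: sum_divide_distrib)
qed

lemma GM'_eq_GM: "GM' n x = GM n (\<lambda>i. 1 - x i)"
  by (simp add: GM_def GM'_def)

lemma AM'_eq_one_minus_AM:
  assumes "1 \<le> n"
  shows "AM' n x = 1 - AM n x"
  using assms by (simp add: AM_def AM'_def sum_subtractf field_simps)

lemma sum_div_less_affine_AM:
  fixes f x :: "nat \<Rightarrow> real"
  assumes "1 \<le> n"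
    and "\<And>i. i \<in> {1..n} \<Longrightarrow> f i \<le> a + b * x i"
    and "\<exists>i\<in>{1..n}. f i < a + b * x i"
  shows "(\<Sum>i=1..n. f i) / real n < a + b * AM n x"
proof -
  have "(\<Sum>i=1..n. f i) < (\<Sum>i=1..n. a + b * x i)"
    by (rule sum_strict_mono_ex1) (use assms in auto)
  also have "\<dots> = real n * (a + b * AM n x)"
    using assms(1) by (simp add: AM_def sum.distrib sum_distrib_left[symmetric] field_simps)
  finally show ?thesis using assms(1) by (simp add: field_simps)
qed

lemma GM_less_AM:
  assumes "1 \<le> n" and pos: "\<And>i. i \<in> {1..n} \<Longrightarrow> 0 < y i"
    and "\<exists>i\<in>{1..n}. \<exists>j\<in>{1..n}. y i \<noteq> y j"
  shows "GM n y < AM n y"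
proof -
  define m where "m = AM n y"
  have "0 < m"
    unfolding m_def AM_def using assms(1) pos by (intro divide_pos_pos sum_pos) auto
  from assms(3) obtain k where k: "k \<in> {1..n}" "y k \<noteq> m" by metis
  have "(\<Sum>i=1..n. ln (y i)) / real n < (ln m - 1) + (1 / m) * AM n y"
  proof (rule sum_div_less_affine_AM[OF assms(1)])
    show "ln (y i) \<le> ln m - 1 + 1 / m * y i" if "i \<in> {1..n}" for i
      using ln_le_tangent[OF pos[OF that] \<open>0 < m\<close>] by simp
    show "\<exists>i\<in>{1..n}. ln (y i) < ln m - 1 + 1 / m * y i"
      using ln_less_tangent[OF pos[OF k(1)] \<open>0 < m\<close> k(2)] k(1) by auto
  qed
  moreover have "1 / m * AM n y = 1" using \<open>0 < m\<close> by (simp add: m_def)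
  ultimately have "ln (GM n y) < ln m" using ln_GM[of n y, OF pos] by linarith
  then show ?thesis using GM_pos[of n y, OF pos] \<open>0 < m\<close> by (simp add: m_def)
qed

locale half_bounded_sample =
  fixes n :: nat and x :: "nat \<Rightarrow> real"
  assumes n_ge_1: "1 \<le> n"
    and range: "\<And>i. i \<in> {1..n} \<Longrightarrow> 0 < x i \<and> x i \<le> 1/2"
    and nonconstant: "\<exists>i\<in>{1..n}. \<exists>j\<in>{1..n}. x i \<noteq> x j"
begin

lemma x_pos: "i \<in> {1..n} \<Longrightarrow> 0 < x i"
  using range by blast

lemma x_le_half: "i \<in> {1..n} \<Longrightarrow> x i \<le> 1/2"
  using range by blast

lemma one_minus_x_pos: "i \<in> {1..n} \<Longrightarrow> 0 < 1 - x i"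
  using x_le_half[of i] by simp

lemma exists_x_ne: "\<exists>k\<in>{1..n}. x k \<noteq> c"
  using nonconstant by metis

lemma AM_pos: "0 < AM n x"
  unfolding AM_def using n_ge_1 range by (intro divide_pos_pos sum_pos) auto

lemma AM_less_half: "AM n x < 1/2"
proof -
  have "(\<Sum>i=1..n. x i) < (\<Sum>i=1..n. 1/2)"
    using range exists_x_ne[of "1/2"] by (intro sum_strict_mono_ex1) (auto simp: less_le)
  then show ?thesis using n_ge_1 by (simp add: AM_def field_simps)
qed

lemma AM'_pos: "0 < AM' n x"
  using AM_less_half by (simp add: AM'_eq_one_minus_AM[OF n_ge_1])

lemma GM_pos_x: "0 < GM n x"
  using range by (auto intro!: GM_pos)

lemma GM'_pos_x: "0 < GM' n x"
  unfolding GM'_eq_GM using one_minus_x_pos by (rule GM_pos)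

lemma GM_less_AM_x: "GM n x < AM n x"
  using n_ge_1 range nonconstant by (intro GM_less_AM) auto

lemma GM'_less_AM'_x: "GM' n x < AM' n x"
proof -
  have "GM n (\<lambda>i. 1 - x i) < AM n (\<lambda>i. 1 - x i)"
    using n_ge_1 one_minus_x_pos nonconstant by (intro GM_less_AM) auto
  then show ?thesis by (simp add: GM'_eq_GM AM_def AM'_def)
qed

lemma half_le_GM': "1/2 \<le> GM' n x"
proof -
  have "(\<Sum>i=1..n. ln (1/2)) \<le> (\<Sum>i=1..n. ln (1 - x i))"
    using x_le_half one_minus_x_pos by (intro sum_mono) simp
  then have "ln (1/2) \<le> (\<Sum>i=1..n. ln (1 - x i)) / real n"
    using n_ge_1 by (simp add: field_simps)
  then have "ln (1/2) \<le> ln (GM' n x)"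
    unfolding GM'_eq_GM by (subst ln_GM[of n "\<lambda>i. 1 - x i", OF one_minus_x_pos])
  then show ?thesis using GM'_pos_x by simp
qed

lemma ln_GM_x: "ln (GM n x) = (\<Sum>i=1..n. ln (x i)) / real n"
  using ln_GM[of n x] x_pos by blast

lemma ln_GM'_x: "ln (GM' n x) = (\<Sum>i=1..n. ln (1 - x i)) / real n"
  unfolding GM'_eq_GM using ln_GM[of n "\<lambda>i. 1 - x i"] one_minus_x_pos by blast

theorem ky_fan_inequality: "AM' n x / GM' n x < AM n x / GM n x"
proof -
  define A where "A = AM n x"
  have A: "0 < A" "A < 1/2" using AM_pos AM_less_half by (simp_all add: A_def)
  define b where "b = 1 / (A * (1 - A))"
  have tangent: "ln (x i) - ln (1 - x i) < ln A - ln (1 - A) - b * A + b * x i"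
    if "i \<in> {1..n}" "x i \<noteq> A" for i
  proof -
    have "(x i - A) / (A * (1 - A)) = b * x i - b * A" by (simp add: b_def diff_divide_distrib)
    then show ?thesis
      using logit_less_tangent[of A "x i"] A x_pos[OF that(1)] x_le_half[OF that(1)] that(2)
      by simp
  qed
  have "(\<Sum>i=1..n. ln (x i) - ln (1 - x i)) / real n
      < (ln A - ln (1 - A) - b * A) + b * AM n x"
  proof (rule sum_div_less_affine_AM[OF n_ge_1])
    show "ln (x i) - ln (1 - x i) \<le> ln A - ln (1 - A) - b * A + b * x i"
      if "i \<in> {1..n}" for i
      using tangent[OF that] by (cases "x i = A") auto
    show "\<exists>i\<in>{1..n}. ln (x i) - ln (1 - x i) < ln A - ln (1 - A) - b * A + b * x i"
      using tangent exists_x_ne[of A] by blast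
  qed
  then have "ln (GM n x) - ln (GM' n x) < ln (AM n x) - ln (AM' n x)"
    unfolding ln_GM_x ln_GM'_x AM'_eq_one_minus_AM[OF n_ge_1]
    by (simp add: sum_subtractf diff_divide_distrib A_def)
  then have "ln (AM' n x / GM' n x) < ln (AM n x / GM n x)"
    using AM_pos GM_pos_x GM'_pos_x AM'_pos by (simp add: ln_div)
  then show ?thesis
    using AM_pos GM_pos_x GM'_pos_x AM'_pos by simp
qed

theorem alzer_inequality: "AM' n x - GM' n x < AM n x - GM n x"
proof -
  define A G G' where "A = AM n x" and "G = GM n x" and "G' = GM' n x"
  have pos: "0 < G" "0 < G'" using GM_pos_x GM'_pos_x by (simp_all add: G_def G'_def)
  have "G < G'"
    using GM_less_AM_x AM_less_half half_le_GM' by (simp add: A_def G_def G'_def)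
  txt \<open>For \<open>q = G/(G + G')\<close> the averaged logarithms collapse to \<open>(2q - 1) ln T\<close>, and
    \<open>ln T \<le> T - 1\<close> finishes the argument.\<close>
  define T where "T = G + G'"
  define q where "q = G / T"
  have T: "0 < T" using pos by (simp add: T_def)
  have q: "0 < q" "q < 1/2" "1 - q = G' / T"
    using pos \<open>G < G'\<close> T by (simp_all add: q_def T_def field_simps)
  have pointwise: "q * ln (x i) - (1 - q) * ln (1 - x i)
      < q * ln q - (1 - q) * ln (1 - q) - 2 * q + 2 * x i"
    if "i \<in> {1..n}" "x i \<noteq> q" for i
    using alzer_pointwise[of q "x i"] q x_pos[OF that(1)] x_le_half[OF that(1)] that(2) by simp
  have "(\<Sum>i=1..n. q * ln (x i) - (1 - q) * ln (1 - x i)) / real n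
      < (q * ln q - (1 - q) * ln (1 - q) - 2 * q) + 2 * AM n x"
  proof (rule sum_div_less_affine_AM[OF n_ge_1])
    show "q * ln (x i) - (1 - q) * ln (1 - x i)
        \<le> q * ln q - (1 - q) * ln (1 - q) - 2 * q + 2 * x i" if "i \<in> {1..n}" for i
      using pointwise[OF that] by (cases "x i = q") auto
    show "\<exists>i\<in>{1..n}. q * ln (x i) - (1 - q) * ln (1 - x i)
        < q * ln q - (1 - q) * ln (1 - q) - 2 * q + 2 * x i"
      using pointwise exists_x_ne[of q] by blast
  qed
  then have "q * ln G - (1 - q) * ln G' < q * ln q - (1 - q) * ln (1 - q) - 2 * q + 2 * A"
    unfolding G_def G'_def ln_GM_x ln_GM'_x
    by (simp add: sum_subtractf diff_divide_distrib sum_distrib_left[symmetric] A_def)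
  moreover have "ln q = ln G - ln T" "ln (1 - q) = ln G' - ln T"
    using pos T q(3) by (simp_all add: q_def ln_div)
  ultimately have "0 < 2 * A - 2 * q + (1 - 2 * q) * ln T"
    by (simp add: algebra_simps)
  moreover have "(1 - 2 * q) * ln T \<le> (1 - 2 * q) * (T - 1)"
    using q T by (intro mult_left_mono ln_le_minus_one) auto
  moreover have "(1 - 2 * q) * T = G' - G"
    using T by (simp add: q_def T_def field_simps)
  ultimately have "1 - A - G' < A - G"
    by (simp add: algebra_simps)
  then show ?thesis
    by (simp add: A_def G_def G'_def AM'_eq_one_minus_AM[OF n_ge_1])
qed

end

section \<open>Comparing the exponents\<close>

lemma diff_mul_one_plus_ln_less:
  fixes A G s :: real
  assumes "0 < G" "G < A" "A \<le> 1/2" "1/2 \<le> s"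
  shows "(A - G) * (1 + ln s - ln (sqrt (A * G))) < s * (ln A - ln G)"
proof -
  define \<alpha> where "\<alpha> = ln A - ln G"
  have ln_sqrt: "ln (sqrt (A * G)) = (ln A + ln G) / 2"
    using assms by (simp add: ln_sqrt ln_mult)
  have "(2 * A - 2 * G) * (1 - (ln (2 * A) + ln (2 * G)) / 2) < ln (2 * A) - ln (2 * G)"
    using assms by (intro diff_mul_one_minus_mean_ln_less) auto
  moreover have "ln (2 * A) = ln 2 + ln A" "ln (2 * G) = ln 2 + ln G"
    using assms by (simp_all add: ln_mult)
  ultimately have main: "2 * ((A - G) * (1 - ln 2 - ln (sqrt (A * G)))) < \<alpha>"
    unfolding ln_sqrt \<alpha>_def by (simp add: field_simps)
  have "A * ln G \<le> A * (ln A - 1 + G / A)"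
    using ln_le_tangent[of G A] assms by (intro mult_left_mono) auto
  then have "A - G \<le> A * \<alpha>" using assms by (simp add: \<alpha>_def algebra_simps)
  also have "\<dots> \<le> \<alpha> / 2" using assms by (simp add: \<alpha>_def mult_right_mono)
  finally have "A - G \<le> \<alpha> / 2" .
  have "ln 2 + ln s \<le> 2 * s - 1"
    using ln_le_minus_one[of "2 * s"] assms by (simp add: ln_mult)
  then have "(A - G) * (ln 2 + ln s) \<le> (A - G) * (2 * s - 1)"
    using assms by (intro mult_left_mono) auto
  also have "\<dots> \<le> \<alpha> / 2 * (2 * s - 1)"
    using \<open>A - G \<le> \<alpha> / 2\<close> assms by (intro mult_right_mono) auto
  finally have "(A - G) * (ln 2 + ln s) \<le> \<alpha> / 2 * (2 * s - 1)" .
  with main show ?thesis by (simp add: \<alpha>_def algebra_simps)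
qed

lemma ln_ratio_mul_one_plus_ln_sqrt_less:
  fixes A G A' G' :: real
  assumes "0 < G" "G < A" "A \<le> 1/2" "1/2 \<le> G'" "G' < A'"
  shows "ln (A' / G') * (1 + ln (sqrt (A' * G' / (A * G)))) < ln (A / G) * ((A' - G') / (A - G))"
proof -
  define s t where "s = sqrt (A' * G')" and "t = sqrt (A * G)"
  have "(1/2)\<^sup>2 \<le> A' * G'"
    using mult_mono[of "1/2" A' "1/2" G'] assms by (simp add: power2_eq_square)
  then have "1/2 \<le> s" unfolding s_def by (rule real_le_rsqrt)
  have "A * G \<le> A' * G'" using assms by (intro mult_mono) auto
  then have "t \<le> s" by (simp add: s_def t_def)
  have pos: "0 < t" "0 < s" using assms \<open>1/2 \<le> s\<close> by (simp_all add: t_def)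
  define L where "L = ln s - ln t"
  have L: "ln (sqrt (A' * G' / (A * G))) = L" "0 \<le> L"
    using assms pos \<open>t \<le> s\<close> by (simp_all add: L_def s_def t_def real_sqrt_divide ln_div)
  have "sqrt (A' * G') = s" by (simp add: s_def)
  then have "ln (A' / G') < (A' - G') / s"
    using ln_diff_less_diff_div_sqrt[of G' A'] assms by (simp add: ln_div mult.commute)
  then have "ln (A' / G') * (1 + L) \<le> (A' - G') / s * (1 + L)"
    using L by (intro mult_right_mono) auto
  also have "\<dots> = (A' - G') / (s * (A - G)) * ((A - G) * (1 + L))"
    using assms pos \<open>t \<le> s\<close> by (simp add: field_simps)
  also have "\<dots> < (A' - G') / (s * (A - G)) * (s * ln (A / G))"
  proof (rule mult_strict_left_mono)
    show "(A - G) * (1 + L) < s * ln (A / G)"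
      using diff_mul_one_plus_ln_less[OF assms(1-3) \<open>1/2 \<le> s\<close>] assms
      by (simp add: L_def t_def ln_div algebra_simps)
    show "0 < (A' - G') / (s * (A - G))" using assms pos by simp
  qed
  also have "\<dots> = ln (A / G) * ((A' - G') / (A - G))"
    using assms pos \<open>t \<le> s\<close> by (simp add: field_simps)
  finally show ?thesis unfolding L .
qed

lemma ln_div_less_ln_sqrt:
  fixes A G A' G' :: real
  assumes "0 < A" "0 < G" "0 < A'" "0 < G'" "A' / G' < A / G"
  shows "ln (A' / A) < ln (sqrt (A' * G' / (A * G)))"
proof -
  have "ln (A' / G') < ln (A / G)" using assms by simp
  then have "ln A' - ln G' < ln A - ln G" using assms by (simp add: ln_div)
  then show ?thesis using assms by (simp add: ln_div ln_sqrt ln_mult real_sqrt_divide field_simps)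
qed

lemma powr_ratio_chain:
  fixes a b d d' L M :: real
  assumes "1 < a" "1 < b" "0 < d'" "d' < d" "0 < M" "M < L"
    and key: "ln b * (1 + L) < ln a * (d' / d)"
  shows "b < a powr (d' / d - ln b / ln a * L)"
    and "a powr (d' / d - ln b / ln a * L) < a powr (d' / d - ln b / ln a * M)"
    and "a powr (d' / d - ln b / ln a * M) < a powr (1 - ln b / ln a * M)"
    and "a powr (1 - ln b / ln a * M) < a"
proof -
  define r where "r = ln b / ln a"
  have "0 < ln a" "0 < ln b" using assms by simp_all
  then have "b = a powr r" "0 < r" "r * (1 + L) < d' / d"
    using assms key by (simp_all add: r_def powr_def field_simps)
  moreover have "r * M < r * L" "0 < r * M" "d' / d < 1" using \<open>0 < r\<close> assms by simp_all
  ultimately show "b < a powr (d' / d - ln b / ln a * L)"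
    and "a powr (d' / d - ln b / ln a * L) < a powr (d' / d - ln b / ln a * M)"
    and "a powr (d' / d - ln b / ln a * M) < a powr (1 - ln b / ln a * M)"
    and "a powr (1 - ln b / ln a * M) < a"
    using assms powr_less_cancel_iff[of a "1 - r * M" 1] unfolding r_def[symmetric]
    by (simp_all add: algebra_simps)
qed

lemma powr_max_chain:
  fixes a b d d' L :: real
  assumes "1 < a" "1 < b" "0 < d'" "d' < d" "0 < L"
    and key: "ln b * (1 + L) < ln a * (d' / d)"
  shows "b < max (b powr (1 + L)) (b powr (d / d'))"
    and "max (b powr (1 + L)) (b powr (d / d')) < b powr ((1 + L) * (d / d'))"
    and "b powr ((1 + L) * (d / d')) < a"
proof -
  have "1 < d / d'" using assms by simp
  then have "1 + L < (1 + L) * (d / d')" "d / d' < (1 + L) * (d / d')"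
    using mult_strict_left_mono[of 1 "d / d'" "1 + L"] mult_strict_right_mono[of 1 "1 + L" "d / d'"]
      assms by simp_all
  then show "b < max (b powr (1 + L)) (b powr (d / d'))"
    and "max (b powr (1 + L)) (b powr (d / d')) < b powr ((1 + L) * (d / d'))"
    using assms powr_less_cancel_iff[of b 1 "1 + L"] by (auto simp: less_max_iff_disj)
  have "(1 + L) * (d / d') * ln b < ln a"
    using key assms by (simp add: field_simps)
  then show "b powr ((1 + L) * (d / d')) < a"
    using assms by (subst ln_less_cancel_iff[symmetric]) auto
qed

lemma power_diff_ratio_less:
  fixes A G A' G' :: real and n :: nat
  assumes "0 < G" "0 < G'" "G' < A'" "A < A'" "A' / G' < A / G" "1 \<le> n"
  shows "(A' ^ n - G' ^ n) / (A ^ n - G ^ n)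
    < (A' ^ n * G' ^ n * ln (A' / G')) / (A ^ n * G ^ n * ln (A / G))"
proof -
  define \<alpha> \<beta> where "\<alpha> = ln (A / G)" and "\<beta> = ln (A' / G')"
  define w w' where "w = (A / G) ^ n" and "w' = (A' / G') ^ n"
  have "1 < A' / G'" using assms by simp
  then have "1 < A / G" using assms by linarith
  then have "G < A" "0 < A" using assms by (simp_all add: less_divide_eq)
  have "1 < w'" "w' < w"
    using \<open>1 < A' / G'\<close> assms by (simp_all add: w_def w'_def one_less_power power_strict_mono)
  then have "(w' - 1) * ln w < (w - 1) * ln w'" by (rule diff_one_mul_ln_less)
  then have "real n * ((w' - 1) * \<alpha>) < real n * ((w - 1) * \<beta>)"
    using \<open>0 < A\<close> assms by (simp add: w_def w'_def \<alpha>_def \<beta>_def ln_realpow algebra_simps)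
  then have key: "(w' - 1) * \<alpha> < (w - 1) * \<beta>" using assms by simp
  have "0 < \<alpha>" "0 < \<beta>" "A ^ n < A' ^ n"
    using \<open>1 < A' / G'\<close> \<open>1 < A / G\<close> \<open>0 < A\<close> assms
    by (simp_all add: \<alpha>_def \<beta>_def power_strict_mono)
  have "(w' - 1) * \<alpha> * A ^ n < (w - 1) * \<beta> * A ^ n"
    using key \<open>0 < A\<close> by simp
  also have "\<dots> < (w - 1) * \<beta> * A' ^ n"
    using \<open>1 < w'\<close> \<open>w' < w\<close> \<open>0 < \<beta>\<close> \<open>A ^ n < A' ^ n\<close> by simp
  finally have "(w' - 1) * (\<alpha> * A ^ n) < \<beta> * A' ^ n * (w - 1)" by (simp add: ac_simps)
  then have ratio: "(w' - 1) / (w - 1) < \<beta> * A' ^ n / (\<alpha> * A ^ n)"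
    using \<open>w' < w\<close> \<open>1 < w'\<close> \<open>0 < \<alpha>\<close> \<open>0 < A\<close> by (simp add: frac_less_eq field_simps)
  have "A ^ n - G ^ n = G ^ n * (w - 1)" "A' ^ n - G' ^ n = G' ^ n * (w' - 1)"
    using assms by (simp_all add: w_def w'_def power_divide field_simps)
  then have "(A' ^ n - G' ^ n) / (A ^ n - G ^ n) = G' ^ n / G ^ n * ((w' - 1) / (w - 1))"
    by (simp add: times_divide_times_eq)
  also have "\<dots> < G' ^ n / G ^ n * (\<beta> * A' ^ n / (\<alpha> * A ^ n))"
    using ratio assms by (intro mult_strict_left_mono) auto
  also have "\<dots> = (A' ^ n * G' ^ n * \<beta>) / (A ^ n * G ^ n * \<alpha>)"
    by (simp add: field_simps)
  finally show ?thesis by (simp add: \<alpha>_def \<beta>_def)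
qed

theorem theorem4p1:
  fixes n :: nat and x :: "nat \<Rightarrow> real"
  assumes "n \<ge> 1"
    and "\<And>i. i \<in> {1..n} \<Longrightarrow> 0 < x i \<and> x i \<le> 1/2"
    and "\<exists>i\<in>{1..n}. \<exists>j\<in>{1..n}. x i \<noteq> x j"
  shows
   "let A = AM n x; G = GM n x; A' = AM' n x; G' = GM' n x;
        r = ln (A' / G') / ln (A / G);
        L = ln (sqrt ((A' * G') / (A * G)))
    in A' / G' < (A / G) powr ((A' - G') / (A - G) - r * L)
     \<and> (A / G) powr ((A' - G') / (A - G) - r * L)
         < (A / G) powr ((A' - G') / (A - G) - r * ln (A' / A))
     \<and> (A / G) powr ((A' - G') / (A - G) - r * ln (A' / A))
         < (A / G) powr (1 - r * ln (A' / A))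
     \<and> (A / G) powr (1 - r * ln (A' / A)) < A / G
     \<and> A' / G' < max ((A' / G') powr (1 + L)) ((A' / G') powr ((A - G) / (A' - G')))
     \<and> max ((A' / G') powr (1 + L)) ((A' / G') powr ((A - G) / (A' - G')))
         < (A' / G') powr ((1 + L) * ((A - G) / (A' - G')))
     \<and> (A' / G') powr ((1 + L) * ((A - G) / (A' - G'))) < A / G
     \<and> (A' ^ n - G' ^ n) / (A ^ n - G ^ n)
         < (A' ^ n * G' ^ n * ln (A' / G')) / (A ^ n * G ^ n * ln (A / G))"
proof -
  interpret half_bounded_sample n x using assms by unfold_locales
  define A G A' G' where "A = AM n x" and "G = GM n x" and "A' = AM' n x" and "G' = GM' n x"
  define L where "L = ln (sqrt ((A' * G') / (A * G)))"
  have means: "0 < G" "G < A" "A < 1/2" "1/2 \<le> G'" "G' < A'" "A' = 1 - A"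
    using GM_pos_x GM_less_AM_x AM_less_half half_le_GM' GM'_less_AM'_x
      AM'_eq_one_minus_AM[OF n_ge_1]
    by (simp_all add: A_def G_def A'_def G'_def)
  have ky_fan: "A' / G' < A / G" and alzer: "A' - G' < A - G"
    using ky_fan_inequality alzer_inequality by (simp_all add: A_def G_def A'_def G'_def)
  have M: "0 < ln (A' / A)" "ln (A' / A) < L"
    using means ky_fan ln_div_less_ln_sqrt[of A G A' G'] by (simp_all add: L_def)
  have key: "ln (A' / G') * (1 + L) < ln (A / G) * ((A' - G') / (A - G))"
    unfolding L_def using means by (intro ln_ratio_mul_one_plus_ln_sqrt_less) auto
  have "1 < A / G" "1 < A' / G'" "0 < A' - G'" using means ky_fan by simp_all
  note chain_facts = this alzer M key
  have "0 < L" using M by simp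
  show ?thesis
    unfolding Let_def A_def[symmetric] G_def[symmetric] A'_def[symmetric] G'_def[symmetric]
      L_def[symmetric]
    using powr_ratio_chain[OF chain_facts] powr_max_chain[OF chain_facts(1-4) \<open>0 < L\<close> key]
      power_diff_ratio_less[of G G' A' A n] means ky_fan n_ge_1
    by simp
qed

end
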